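(* Let $n\ge1$ and let $\mathbf s=(s_1,\dots,s_n)\in\mathbb C^n$ be typical, i.e. $s_i+s_j\neq0$ for all $i\neq j$. Then the restriction of $V(\mathbf s)$ to $W^n$ is a simple $W^n$-module.
   Context: $U(\mathfrak h_n)$ is the associative superalgebra generated by odd elements $\xi_1,\dots,\xi_n$ with $\xi_i\xi_j+\xi_j\xi_i=0$ for $i\neq j$, and $x_i=\xi_i^2$ (central); it is the enveloping algebra of the Cartan subalgebra of the queer Lie superalgebra $Q(n)$. $W^n\subset U(\mathfrak h_n)$ is the finite $W$-algebra of $Q(n)$ for the principal even nilpotent element, realized in $U(\mathfrak h_n)$ via the injective Harish-Chandra homomorphism; concretely it is the subalgebra generated by $u_k(0),u_k(1)$ ($1\le k\le n$), the even and odd parts of $\sum_{1\le i_1<\dots<i_k\le n}\prod_{j=1}^{k}(x_{i_j}+(-1)^{k-j}\xi_{i_j})$ (ordered product). For $\mathbf s\in\mathbb C^n$, $V(\mathbf s)$ is a simple $\mathbb Z_2$-graded $U(\mathfrak h_n)$-module on which each $x_i$ acts by the scalar $s_i$; it exists and is unique up to isomorphism and parity change. *)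

theory Defs
  imports Complex_Main
begin

definition is_grading :: "(complex \<Rightarrow> 'v::ab_group_add \<Rightarrow> 'v) \<Rightarrow> 'v set \<Rightarrow> 'v set \<Rightarrow> bool" where
  "is_grading sc V0 V1 \<longleftrightarrow> module.subspace sc V0 \<and> module.subspace sc V1 \<and>
     (\<forall>v. \<exists>!p. fst p \<in> V0 \<and> snd p \<in> V1 \<and> v = fst p + snd p)"

definition graded_subspace :: "(complex \<Rightarrow> 'v::ab_group_add \<Rightarrow> 'v) \<Rightarrow> 'v set \<Rightarrow> 'v set \<Rightarrow> 'v set \<Rightarrow> bool" where
  "graded_subspace sc V0 V1 W \<longleftrightarrow> module.subspace sc W \<and>
     (\<forall>w\<in>W. \<exists>a b. a \<in> V0 \<inter> W \<and> b \<in> V1 \<inter> W \<and> w = a + b)"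

text \<open>The (unital, associative) algebra of operators generated by a set G of operators;
  this is the image in End(V) of the algebra generated by elements acting as G.\<close>
inductive_set op_alg :: "(complex \<Rightarrow> 'v::ab_group_add \<Rightarrow> 'v) \<Rightarrow> ('v \<Rightarrow> 'v) set \<Rightarrow> ('v \<Rightarrow> 'v) set"
  for sc G where
  op_alg_id: "id \<in> op_alg sc G"
| op_alg_gen: "g \<in> G \<Longrightarrow> g \<in> op_alg sc G"
| op_alg_add: "S \<in> op_alg sc G \<Longrightarrow> T \<in> op_alg sc G \<Longrightarrow> (\<lambda>v. S v + T v) \<in> op_alg sc G"
| op_alg_scale: "T \<in> op_alg sc G \<Longrightarrow> (\<lambda>v. sc c (T v)) \<in> op_alg sc G"
| op_alg_comp: "S \<in> op_alg sc G \<Longrightarrow> T \<in> op_alg sc G \<Longrightarrow> S \<circ> T \<in> op_alg sc G"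

definition simple_graded :: "(complex \<Rightarrow> 'v::ab_group_add \<Rightarrow> 'v) \<Rightarrow> 'v set \<Rightarrow> 'v set \<Rightarrow> ('v \<Rightarrow> 'v) set \<Rightarrow> bool" where
  "simple_graded sc V0 V1 G \<longleftrightarrow> (UNIV :: 'v set) \<noteq> {0} \<and>
     (\<forall>W. graded_subspace sc V0 V1 W \<and> (\<forall>T\<in>op_alg sc G. \<forall>w\<in>W. T w \<in> W)
          \<longrightarrow> W = {0} \<or> W = UNIV)"

text \<open>A Z2-graded U(h_n)-module: the generators xi_1..xi_n (indices 0..n-1 here) act by
  odd linear operators Xi i satisfying Xi i Xi j + Xi j Xi i = 0 for i \<noteq> j.
  (Centrality of x_i = xi_i^2 follows from these relations.)\<close>
definition Uh_module :: "(complex \<Rightarrow> 'v::ab_group_add \<Rightarrow> 'v) \<Rightarrow> 'v set \<Rightarrow> 'v set \<Rightarrow> nat \<Rightarrow> (nat \<Rightarrow> 'v \<Rightarrow> 'v) \<Rightarrow> bool" where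
  "Uh_module sc V0 V1 n Xi \<longleftrightarrow> vector_space sc \<and> is_grading sc V0 V1 \<and>
     (\<forall>i<n. Vector_Spaces.linear sc sc (Xi i) \<and> Xi i ` V0 \<subseteq> V1 \<and> Xi i ` V1 \<subseteq> V0) \<and>
     (\<forall>i<n. \<forall>j<n. i \<noteq> j \<longrightarrow> (\<forall>v. Xi i (Xi j v) + Xi j (Xi i v) = 0))"

text \<open>Ordered product prod_{j=1}^k (x_{i_j} + t (-1)^(k-j) xi_{i_j}) acting on V,
  for the list [i_1,...,i_k]; t = 1 gives the element itself, t = -1 its image under
  the parity automorphism xi \<mapsto> -xi.\<close>
fun ord_prod :: "(complex \<Rightarrow> 'v::ab_group_add \<Rightarrow> 'v) \<Rightarrow> (nat \<Rightarrow> 'v \<Rightarrow> 'v) \<Rightarrow> complex \<Rightarrow> nat list \<Rightarrow> 'v \<Rightarrow> 'v" where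
  "ord_prod sc Xi t [] = id"
| "ord_prod sc Xi t (i # is) =
     (\<lambda>v. Xi i (Xi i v) + sc (t * (-1) ^ length is) (Xi i v)) \<circ> ord_prod sc Xi t is"

text \<open>Action of u_k (t = 1), resp. its parity-twisted version (t = -1):
  sum over i_1 < ... < i_k in {1..n}.\<close>
definition u_op :: "(complex \<Rightarrow> 'v::ab_group_add \<Rightarrow> 'v) \<Rightarrow> (nat \<Rightarrow> 'v \<Rightarrow> 'v) \<Rightarrow> nat \<Rightarrow> nat \<Rightarrow> complex \<Rightarrow> 'v \<Rightarrow> 'v" where
  "u_op sc Xi n k t = (\<lambda>v. \<Sum>S\<in>{S. S \<subseteq> {..<n} \<and> card S = k}. ord_prod sc Xi t (sorted_list_of_set S) v)"

text \<open>Actions of the even part u_k(0) and odd part u_k(1) of u_k.\<close>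
definition u_even :: "(complex \<Rightarrow> 'v::ab_group_add \<Rightarrow> 'v) \<Rightarrow> (nat \<Rightarrow> 'v \<Rightarrow> 'v) \<Rightarrow> nat \<Rightarrow> nat \<Rightarrow> 'v \<Rightarrow> 'v" where
  "u_even sc Xi n k = (\<lambda>v. sc (1/2) (u_op sc Xi n k 1 v + u_op sc Xi n k (-1) v))"

definition u_odd :: "(complex \<Rightarrow> 'v::ab_group_add \<Rightarrow> 'v) \<Rightarrow> (nat \<Rightarrow> 'v \<Rightarrow> 'v) \<Rightarrow> nat \<Rightarrow> nat \<Rightarrow> 'v \<Rightarrow> 'v" where
  "u_odd sc Xi n k = (\<lambda>v. sc (1/2) (u_op sc Xi n k 1 v - u_op sc Xi n k (-1) v))"

definition W_gens :: "(complex \<Rightarrow> 'v::ab_group_add \<Rightarrow> 'v) \<Rightarrow> (nat \<Rightarrow> 'v \<Rightarrow> 'v) \<Rightarrow> nat \<Rightarrow> ('v \<Rightarrow> 'v) set" where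
  "W_gens sc Xi n = {u_even sc Xi n k | k. 1 \<le> k \<and> k \<le> n} \<union> {u_odd sc Xi n k | k. 1 \<le> k \<and> k \<le> n}"

definition typical :: "nat \<Rightarrow> (nat \<Rightarrow> complex) \<Rightarrow> bool" where
  "typical n s \<longleftrightarrow> (\<forall>i<n. \<forall>j<n. i \<noteq> j \<longrightarrow> s i + s j \<noteq> 0)"

end

theory Submission
  imports Defs "HOL-Library.Function_Algebras" "HOL-Library.Indicator_Function"
begin

(*
  The operator algebra generated by W^n contains u_1(1) = sum_i xi_i and, up to a
  scalar, Q = sum_{i<j} xi_i xi_j (from u_2(0)). The commutator of Q with
  sum_k c_k xi_k is 2 sum_i (G c)_i xi_i, where (G c)_i = sum_k s_k c_k sgn(k - i).
  So the coefficient vectors c whose combination lies in that algebra form a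
  G-stable subspace K containing (1, ..., 1).

  Typicality makes (1, ..., 1) a cyclic vector of G. Let h_m = e_0 + ... + e_{m-1}
  and K_j = K + span {h_m | m < j}; then K_n contains every h_m and K_1 = K. Each K_j
  is G-stable and G - s_{j-1} maps K_{j+1} into K_j; applied to e_k this gives
  (s_{j-1} + s_k) h_k in K_j + C h_{k+1}, so descending from h_n all h_k lie in K_j.
  Hence every xi_k lies in the algebra generated by W^n, which therefore has the
  same graded submodules of V(s) as U(h_n).
*)

lemma op_alg_subset:
  assumes "G \<subseteq> op_alg sc H"
  shows "op_alg sc G \<subseteq> op_alg sc H"
proof
  fix T assume "T \<in> op_alg sc G"
  then show "T \<in> op_alg sc H"
    by induction (use assms in \<open>blast intro: op_alg.intros\<close>)+
qed

lemma simple_graded_op_alg_mono: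
  assumes "simple_graded sc V0 V1 G" and "G \<subseteq> op_alg sc H"
  shows "simple_graded sc V0 V1 H"
  using assms op_alg_subset[OF assms(2)] unfolding simple_graded_def by blast

lemma op_alg_zero:
  assumes "module sc"
  shows "(\<lambda>v. 0) \<in> op_alg sc G"
proof -
  have "(\<lambda>v. sc 0 (id v)) \<in> op_alg sc G"
    by (rule op_alg_scale[OF op_alg_id])
  also have "(\<lambda>v. sc 0 (id v)) = (\<lambda>v. 0)"
    using module.scale_zero_left[OF assms] by simp
  finally show ?thesis .
qed

lemma op_alg_diff:
  assumes "module sc" and "S \<in> op_alg sc G" and "T \<in> op_alg sc G"
  shows "(\<lambda>v. S v - T v) \<in> op_alg sc G"
  using op_alg_add[OF assms(2) op_alg_scale[OF assms(3), of "-1"]]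
  by (simp add: module.scale_minus_left[OF assms(1)] module.scale_one[OF assms(1)])

lemma indicator_lessThan_Suc:
  "indicator {..<Suc k} = indicator {..<k} + (indicator {k} :: nat \<Rightarrow> 'a::ring_1)"
  by (auto simp: fun_eq_iff indicator_def)

lemma indicator_singleton_eq_diff:
  "indicator {k} = indicator {..<Suc k} - (indicator {..<k} :: nat \<Rightarrow> 'a::ring_1)"
  by (simp add: indicator_lessThan_Suc)

definition scale_coeffs :: "complex \<Rightarrow> (nat \<Rightarrow> complex) \<Rightarrow> nat \<Rightarrow> complex" where
  "scale_coeffs a c = (\<lambda>i. a * c i)"

interpretation coeffs: vector_space scale_coeffs
  by unfold_locales (auto simp: scale_coeffs_def fun_eq_iff algebra_simps)

(* For i < n its i-th entry is 1, 0 or -1 according as i < k, i = k or i > k. *)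
definition sign_vec :: "nat \<Rightarrow> nat \<Rightarrow> nat \<Rightarrow> complex" where
  "sign_vec n k = indicator {..<k} + indicator {..<Suc k} - indicator {..<n}"

(* The map G of the header: half the commutator with Q, on coefficient vectors. *)
definition pair_bracket :: "nat \<Rightarrow> (nat \<Rightarrow> complex) \<Rightarrow> (nat \<Rightarrow> complex) \<Rightarrow> nat \<Rightarrow> complex" where
  "pair_bracket n s c = (\<lambda>i. \<Sum>k<n. s k * c k * sign_vec n k i)"

lemma module_hom_pair_bracket: "module_hom scale_coeffs scale_coeffs (pair_bracket n s)"
  unfolding module_hom_iff
  by (auto simp: coeffs.module_axioms pair_bracket_def scale_coeffs_def fun_eq_iff
      sum.distrib sum_distrib_left algebra_simps)

lemma pair_bracket_unit:
  "k < n \<Longrightarrow> pair_bracket n s (indicator {k}) = scale_coeffs (s k) (sign_vec n k)"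
  by (simp add: pair_bracket_def scale_coeffs_def fun_eq_iff indicator_def of_bool_def
      if_distrib[of "\<lambda>x. _ * x * _"] cong: if_cong)

lemma pair_bracket_indicator_Suc:
  "k < n \<Longrightarrow> pair_bracket n s (indicator {..<Suc k}) =
    pair_bracket n s (indicator {..<k}) + scale_coeffs (s k) (sign_vec n k)"
  using module_hom.add[OF module_hom_pair_bracket] pair_bracket_unit
  by (simp add: indicator_lessThan_Suc)

(* K_j of the header; indicator {..<m} is the partial sum h_m. *)
definition flag_space :: "(nat \<Rightarrow> complex) set \<Rightarrow> nat \<Rightarrow> (nat \<Rightarrow> complex) set" where
  "flag_space K j = coeffs.span (K \<union> (\<lambda>m. indicator {..<m}) ` {..<j})"

locale bracket_invariant_subspace =
  fixes n :: nat and s :: "nat \<Rightarrow> complex" and K :: "(nat \<Rightarrow> complex) set"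
  assumes subspace: "coeffs.subspace K"
    and bracket_closed: "c \<in> K \<Longrightarrow> pair_bracket n s c \<in> K"
    and indicator_lessThan_n: "indicator {..<n} \<in> K"
begin

lemma subset_flag_space: "K \<subseteq> flag_space K j"
  and indicator_in_flag_space: "m < j \<Longrightarrow> indicator {..<m} \<in> flag_space K j"
  unfolding flag_space_def by (auto intro: coeffs.span_base)

lemma flag_space_Suc_0: "flag_space K (Suc 0) = K"
proof -
  have "(\<lambda>m. indicator {..<m}) ` {..<Suc 0} = {0 :: nat \<Rightarrow> complex}"
    by (auto simp: fun_eq_iff)
  then show ?thesis
    using subspace by (simp add: flag_space_def)
qed

lemma bracket_flag_space:
  assumes "j \<le> n" and "c \<in> flag_space K j"
  shows "pair_bracket n s c \<in> flag_space K j"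
proof -
  let ?F = "flag_space K j"
  have F: "coeffs.subspace ?F"
    by (simp add: flag_space_def)
  have bracket_indicator: "pair_bracket n s (indicator {..<m}) \<in> ?F" if "m < j" for m
    using that
  proof (induction m)
    case 0
    have "indicator {..<0::nat} = (0 :: nat \<Rightarrow> complex)"
      by (simp add: fun_eq_iff)
    then show ?case
      using coeffs.subspace_0[OF F] module_hom.zero[OF module_hom_pair_bracket] by metis
  next
    case (Suc m)
    have "m < n" using Suc.prems assms(1) by simp
    have "sign_vec n m \<in> ?F"
      unfolding sign_vec_def
      using Suc.prems indicator_in_flag_space subset_flag_space indicator_lessThan_n
      by (intro coeffs.subspace_diff coeffs.subspace_add F) auto
    then show ?case
      unfolding pair_bracket_indicator_Suc[OF \<open>m < n\<close>]
      using Suc by (intro coeffs.subspace_add coeffs.subspace_scale F) auto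
  qed
  have "coeffs.span (K \<union> (\<lambda>m. indicator {..<m}) ` {..<j}) \<subseteq> {c. pair_bracket n s c \<in> ?F}"
  proof (rule coeffs.span_minimal)
    show "coeffs.subspace {c. pair_bracket n s c \<in> ?F}"
      by (rule module_hom.subspace_linear_preimage[OF module_hom_pair_bracket F])
    show "K \<union> (\<lambda>m. indicator {..<m}) ` {..<j} \<subseteq> {c. pair_bracket n s c \<in> ?F}"
      using bracket_closed subset_flag_space bracket_indicator by auto
  qed
  then show ?thesis using assms(2) unfolding flag_space_def by blast
qed

lemma bracket_shift_flag_space:
  assumes "Suc p < n" and "c \<in> flag_space K (Suc (Suc p))"
  shows "pair_bracket n s c - scale_coeffs (s p) c \<in> flag_space K (Suc p)"
proof -
  let ?F = "flag_space K (Suc p)"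
  define T where "T c = pair_bracket n s c - scale_coeffs (s p) c" for c
  have F: "coeffs.subspace ?F"
    by (simp add: flag_space_def)
  have T: "module_hom scale_coeffs scale_coeffs T"
    using module_hom.add[OF module_hom_pair_bracket] module_hom.scale[OF module_hom_pair_bracket]
    unfolding module_hom_iff T_def
    by (auto simp: coeffs.module_axioms scale_coeffs_def fun_eq_iff algebra_simps)
  have T_flag_space: "T c \<in> ?F" if "c \<in> ?F" for c
    unfolding T_def using that assms(1)
    by (intro coeffs.subspace_diff coeffs.subspace_scale F bracket_flag_space) auto
  have "T (indicator {..<Suc p}) =
      pair_bracket n s (indicator {..<p}) + scale_coeffs (s p) (indicator {..<p} - indicator {..<n})"
    using assms(1)
    by (simp add: T_def pair_bracket_indicator_Suc sign_vec_def scale_coeffs_def fun_eq_iff algebra_simps)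
  moreover have "pair_bracket n s (indicator {..<p}) \<in> ?F"
    using assms(1) indicator_in_flag_space[of p] by (intro bracket_flag_space) auto
  moreover have "indicator {..<p} - indicator {..<n} \<in> ?F"
    using indicator_in_flag_space[of p] subset_flag_space indicator_lessThan_n
    by (intro coeffs.subspace_diff F) auto
  ultimately have T_indicator: "T (indicator {..<Suc p}) \<in> ?F"
    by (simp add: coeffs.subspace_add coeffs.subspace_scale F)
  have "c \<in> coeffs.span (insert (indicator {..<Suc p}) (K \<union> (\<lambda>m. indicator {..<m}) ` {..<Suc p}))"
    using assms(2) by (simp add: flag_space_def lessThan_Suc)
  then obtain a where a: "c - scale_coeffs a (indicator {..<Suc p}) \<in> ?F"
    unfolding coeffs.span_breakdown_eq flag_space_def by blast
  have "T c = T (c - scale_coeffs a (indicator {..<Suc p})) + scale_coeffs a (T (indicator {..<Suc p}))"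
    using module_hom.add[OF T] module_hom.scale[OF T] by (metis diff_add_cancel)
  then show ?thesis
    using a T_flag_space T_indicator by (simp add: T_def coeffs.subspace_add coeffs.subspace_scale F)
qed

lemma flag_space_descend:
  assumes "typical n s" and "Suc p < n"
    and above: "\<And>m. m \<le> n \<Longrightarrow> indicator {..<m} \<in> flag_space K (Suc (Suc p))"
    and "m \<le> n"
  shows "indicator {..<m} \<in> flag_space K (Suc p)"
proof -
  let ?F = "flag_space K (Suc p)"
  have F: "coeffs.subspace ?F"
    by (simp add: flag_space_def)
  have indicator_n: "indicator {..<n} \<in> ?F"
    using subset_flag_space indicator_lessThan_n by blast
  have "indicator {..<k} \<in> ?F" if "Suc p \<le> k" "k \<le> n" for k
    using that(2)
  proof (induction k rule: inc_induct)
    case base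
    show ?case by (rule indicator_n)
  next
    case (step k)
    have "indicator {k} \<in> flag_space K (Suc (Suc p))"
      unfolding indicator_singleton_eq_diff using above[of k] above[of "Suc k"] step.hyps
      by (simp add: coeffs.subspace_diff flag_space_def)
    then have "pair_bracket n s (indicator {k}) - scale_coeffs (s p) (indicator {k}) \<in> ?F"
      by (rule bracket_shift_flag_space[OF assms(2)])
    moreover have "scale_coeffs (s p + s k) (indicator {..<k}) =
        (pair_bracket n s (indicator {k}) - scale_coeffs (s p) (indicator {k}))
        + scale_coeffs (s k) (indicator {..<n}) + scale_coeffs (s p - s k) (indicator {..<Suc k})"
      using step.hyps
      by (simp add: pair_bracket_unit sign_vec_def scale_coeffs_def fun_eq_iff indicator_def
          algebra_simps)
    ultimately have "scale_coeffs (s p + s k) (indicator {..<k}) \<in> ?F"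
      using indicator_n step.IH by (simp add: coeffs.subspace_add coeffs.subspace_scale F)
    moreover have "s p + s k \<noteq> 0"
      using assms(1) that(1) step.hyps unfolding typical_def by auto
    ultimately show ?case
      using coeffs.subspace_scale[OF F, of "scale_coeffs (s p + s k) (indicator {..<k})"
          "inverse (s p + s k)"] by simp
  qed
  then show ?thesis
    using indicator_in_flag_space assms(4) by (cases "m < Suc p") auto
qed

lemma indicator_unit_in_subspace:
  assumes "typical n s" and "k < n"
  shows "indicator {k} \<in> K"
proof -
  have "indicator {..<m} \<in> flag_space K j" if j: "Suc 0 \<le> j" "j \<le> n" and "m \<le> n" for j m
    using j(2) that(3)
  proof (induction j arbitrary: m rule: inc_induct)
    case base
    then show ?case
      using indicator_in_flag_space subset_flag_space indicator_lessThan_n by (cases "m < n") auto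
  next
    case (step i)
    then obtain p where "i = Suc p"
      using j(1) by (cases i) auto
    then show ?case
      using flag_space_descend[OF assms(1)] step by simp
  qed
  then have "indicator {..<m} \<in> K" if "m \<le> n" for m
    using that assms(2) flag_space_Suc_0 by auto
  then show ?thesis
    unfolding indicator_singleton_eq_diff using assms(2) subspace by (simp add: coeffs.subspace_diff)
qed

end

lemma u_op_one: "u_op sc Xi n 1 t v = (\<Sum>i<n. Xi i (Xi i v) + sc t (Xi i v))"
proof -
  have "{S. S \<subseteq> {..<n} \<and> card S = 1} = (\<lambda>i. {i}) ` {..<n}"
    by (auto simp: card_1_singleton_iff)
  then show ?thesis
    unfolding u_op_def by (simp add: sum.reindex)
qed

lemma u_op_two: "u_op sc Xi n 2 t v = (\<Sum>j<n. \<Sum>i<j. ord_prod sc Xi t [i, j] v)"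
proof -
  let ?pair = "\<lambda>(j, i). {i, j :: nat}"
  have pairs: "{S. S \<subseteq> {..<n} \<and> card S = 2} = ?pair ` (SIGMA j:{..<n}. {..<j})"
  proof (rule set_eqI, rule iffI)
    fix S assume "S \<in> {S. S \<subseteq> {..<n} \<and> card S = 2}"
    then obtain x y where "S = {x, y}" "x \<noteq> y" "x < n" "y < n"
      by (auto simp: card_2_iff)
    then show "S \<in> ?pair ` (SIGMA j:{..<n}. {..<j})"
      by (cases "x < y") (auto intro: image_eqI[of _ _ "(y, x)"] image_eqI[of _ _ "(x, y)"])
  qed auto
  have inj: "inj_on ?pair (SIGMA j:{..<n}. {..<j})"
    by (auto simp: inj_on_def doubleton_eq_iff)
  have "u_op sc Xi n 2 t v =
      (\<Sum>S\<in>?pair ` (SIGMA j:{..<n}. {..<j}). ord_prod sc Xi t (sorted_list_of_set S) v)"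
    unfolding u_op_def pairs ..
  also have "\<dots> = (\<Sum>(j, i)\<in>(SIGMA j:{..<n}. {..<j}). ord_prod sc Xi t [i, j] v)"
    unfolding sum.reindex[OF inj] by (rule sum.cong) (auto simp del: ord_prod.simps)
  also have "\<dots> = (\<Sum>j<n. \<Sum>i<j. ord_prod sc Xi t [i, j] v)"
    by (rule sum.Sigma[symmetric]) auto
  finally show ?thesis .
qed

lemma sum_pairs_delta:
  fixes A :: "nat \<Rightarrow> 'a::ab_group_add"
  assumes "k < n"
  shows "(\<Sum>j<n. \<Sum>i<j. (if j = k then A i else 0) - (if i = k then A j else 0)) =
    (\<Sum>i<k. A i) - (\<Sum>j<n. if k < j then A j else 0)"
proof -
  have "(\<Sum>j<n. \<Sum>i<j. if j = k then A i else 0) = (\<Sum>j<n. if j = k then (\<Sum>i<j. A i) else 0)"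
    by (intro sum.cong refl) simp
  also have "\<dots> = (\<Sum>i<k. A i)"
    using assms by simp
  finally have "(\<Sum>j<n. \<Sum>i<j. if j = k then A i else 0) = (\<Sum>i<k. A i)" .
  moreover have "(\<Sum>j<n. \<Sum>i<j. if i = k then A j else 0) = (\<Sum>j<n. if k < j then A j else 0)"
    by (intro sum.cong refl) simp
  ultimately show ?thesis
    by (simp only: sum_subtractf)
qed

locale clifford_action = vector_space sc for sc :: "complex \<Rightarrow> 'v::ab_group_add \<Rightarrow> 'v" +
  fixes n :: nat and Xi :: "nat \<Rightarrow> 'v \<Rightarrow> 'v" and s :: "nat \<Rightarrow> complex"
  assumes linear_Xi: "i < n \<Longrightarrow> Vector_Spaces.linear sc sc (Xi i)"
    and Xi_anticommute: "i < n \<Longrightarrow> j < n \<Longrightarrow> i \<noteq> j \<Longrightarrow> Xi i (Xi j v) + Xi j (Xi i v) = 0"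
    and Xi_square: "i < n \<Longrightarrow> Xi i (Xi i v) = sc (s i) v"
begin

lemma module_hom_Xi: "i < n \<Longrightarrow> module_hom sc sc (Xi i)"
  using linear_Xi by (simp add: linear_iff_module_hom)

lemma Xi_add: "i < n \<Longrightarrow> Xi i (x + y) = Xi i x + Xi i y"
  and Xi_scale: "i < n \<Longrightarrow> Xi i (sc a x) = sc a (Xi i x)"
  and Xi_minus: "i < n \<Longrightarrow> Xi i (- x) = - Xi i x"
  and Xi_sum: "i < n \<Longrightarrow> Xi i (sum g A) = (\<Sum>a\<in>A. Xi i (g a))"
  using module_hom.add[OF module_hom_Xi] module_hom.scale[OF module_hom_Xi]
    module_hom.neg[OF module_hom_Xi]
    module_hom.sum[OF module_hom_Xi] by auto

lemma Xi_swap: "i < n \<Longrightarrow> j < n \<Longrightarrow> i \<noteq> j \<Longrightarrow> Xi i (Xi j v) = - Xi j (Xi i v)"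
  using Xi_anticommute by (simp add: eq_neg_iff_add_eq_0)

lemma scale_half_double: "sc (1/2) (x + x) = x"
  by (simp add: scale_right_distrib flip: scale_left_distrib)

lemma scale_double: "sc (2 * a) x = sc a x + sc a x"
  by (metis mult_2 scale_left_distrib)

definition Xi_combination :: "(nat \<Rightarrow> complex) \<Rightarrow> 'v \<Rightarrow> 'v" where
  "Xi_combination c = (\<lambda>v. \<Sum>i<n. sc (c i) (Xi i v))"

definition Xi_pairs :: "'v \<Rightarrow> 'v" where
  "Xi_pairs = (\<lambda>v. \<Sum>j<n. \<Sum>i<j. Xi i (Xi j v))"

lemma Xi_combination_unit: "k < n \<Longrightarrow> Xi_combination (indicator {k}) = Xi k"
  by (simp add: Xi_combination_def fun_eq_iff indicator_def of_bool_def
      if_distrib[of "\<lambda>a. sc a _"] cong: if_cong)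

lemma u_odd_one: "u_odd sc Xi n 1 = Xi_combination (indicator {..<n})"
proof
  fix v
  have "u_op sc Xi n 1 1 v - u_op sc Xi n 1 (-1) v = (\<Sum>i<n. Xi i v + Xi i v)"
    unfolding u_op_one sum_subtractf[symmetric] by (rule sum.cong) auto
  then show "u_odd sc Xi n 1 v = Xi_combination (indicator {..<n}) v"
    by (simp add: u_odd_def Xi_combination_def sum.distrib scale_half_double)
qed

lemma ord_prod_pair:
  "i < j \<Longrightarrow> j < n \<Longrightarrow> ord_prod sc Xi t [i, j] v =
    sc (s i * s j) v + sc t (sc (s i) (Xi j v) - sc (s j) (Xi i v)) - sc (t * t) (Xi i (Xi j v))"
  by (simp add: Xi_square Xi_add Xi_scale algebra_simps)

lemma u_even_two: "u_even sc Xi n 2 = (\<lambda>v. sc (\<Sum>j<n. \<Sum>i<j. s i * s j) v - Xi_pairs v)"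
proof
  fix v
  have pair: "sc (1/2) (ord_prod sc Xi 1 [i, j] v + ord_prod sc Xi (-1) [i, j] v) =
      sc (s i * s j) v - Xi i (Xi j v)" if "i < j" "j < n" for i j
    unfolding ord_prod_pair[OF that]
    using scale_half_double[of "sc (s i * s j) v - Xi i (Xi j v)"] by (simp add: algebra_simps)
  have "u_even sc Xi n 2 v =
      (\<Sum>j<n. \<Sum>i<j. sc (1/2) (ord_prod sc Xi 1 [i, j] v + ord_prod sc Xi (-1) [i, j] v))"
    unfolding u_even_def u_op_two by (simp only: sum.distrib[symmetric] scale_sum_right)
  also have "\<dots> = (\<Sum>j<n. \<Sum>i<j. sc (s i * s j) v - Xi i (Xi j v))"
    by (intro sum.cong refl pair) auto
  also have "\<dots> = sc (\<Sum>j<n. \<Sum>i<j. s i * s j) v - Xi_pairs v"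
    by (simp add: Xi_pairs_def sum_subtractf scale_sum_left)
  finally show "u_even sc Xi n 2 v = sc (\<Sum>j<n. \<Sum>i<j. s i * s j) v - Xi_pairs v" .
qed

lemma module_hom_Xi_pairs: "module_hom sc sc Xi_pairs"
  unfolding module_hom_iff Xi_pairs_def
  by (auto simp: module_axioms Xi_add Xi_scale sum.distrib scale_sum_right)

lemma Xi_triple_commutator:
  assumes "i < j" and "j < n" and "k < n"
  shows "Xi i (Xi j (Xi k v)) - Xi k (Xi i (Xi j v)) =
    (if j = k then sc (2 * s k) (Xi i v) else 0) - (if i = k then sc (2 * s k) (Xi j v) else 0)"
proof -
  have "i < n" using assms by simp
  consider "j = k" | "i = k" | "j \<noteq> k" "i \<noteq> k" by blast
  then show ?thesis
  proof cases
    case 1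
    then show ?thesis
      using assms \<open>i < n\<close>
      by (simp add: Xi_swap[of k i] Xi_square Xi_scale Xi_minus scale_double)
  next
    case 2
    then show ?thesis
      using assms
      by (simp add: Xi_swap[of j k] Xi_square Xi_minus scale_double)
  next
    case 3
    then show ?thesis
      using assms \<open>i < n\<close> by (simp add: Xi_swap[of j k] Xi_swap[of i k] Xi_minus)
  qed
qed

lemma sum_scale_sign_vec:
  assumes "k < n"
  shows "(\<Sum>i<n. sc (sign_vec n k i) (A i)) = (\<Sum>i<k. A i) - (\<Sum>i<n. if k < i then A i else 0)"
proof -
  have "(\<Sum>i<n. if i < k then A i else 0) = (\<Sum>i\<in>{..<n} \<inter> {i. i < k}. A i)"
    by (simp add: sum.inter_restrict)
  also have "{..<n} \<inter> {i. i < k} = {..<k}"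
    using assms by auto
  finally have "(\<Sum>i<k. A i) = (\<Sum>i<n. if i < k then A i else 0)" ..
  moreover have "sc (sign_vec n k i) (A i) = (if i < k then A i else 0) - (if k < i then A i else 0)"
    if "i < n" for i
    using that by (auto simp: sign_vec_def indicator_def)
  ultimately show ?thesis
    by (simp add: sum_subtractf)
qed

lemma Xi_pairs_commutator_Xi:
  assumes "k < n"
  shows "Xi_pairs (Xi k v) - Xi k (Xi_pairs v) = sc (2 * s k) (Xi_combination (sign_vec n k) v)"
proof -
  define A where "A i = sc (2 * s k) (Xi i v)" for i
  have "Xi_pairs (Xi k v) - Xi k (Xi_pairs v) =
      (\<Sum>j<n. \<Sum>i<j. Xi i (Xi j (Xi k v)) - Xi k (Xi i (Xi j v)))"
    unfolding Xi_pairs_def using assms by (simp add: Xi_sum sum_subtractf)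
  also have "\<dots> = (\<Sum>j<n. \<Sum>i<j. (if j = k then A i else 0) - (if i = k then A j else 0))"
    unfolding A_def using assms by (intro sum.cong refl) (simp add: Xi_triple_commutator)
  also have "\<dots> = (\<Sum>i<k. A i) - (\<Sum>j<n. if k < j then A j else 0)"
    using sum_pairs_delta[OF assms] .
  also have "\<dots> = (\<Sum>i<n. sc (sign_vec n k i) (A i))"
    using sum_scale_sign_vec[OF assms] by simp
  also have "\<dots> = sc (2 * s k) (Xi_combination (sign_vec n k) v)"
    by (simp add: A_def Xi_combination_def scale_sum_right mult.commute)
  finally show ?thesis .
qed

lemma Xi_pairs_commutator:
  "Xi_pairs (Xi_combination c v) - Xi_combination c (Xi_pairs v) =
    sc 2 (Xi_combination (pair_bracket n s c) v)"
proof -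
  have "Xi_pairs (Xi_combination c v) - Xi_combination c (Xi_pairs v) =
      (\<Sum>k<n. sc (c k) (Xi_pairs (Xi k v) - Xi k (Xi_pairs v)))"
    by (simp add: Xi_combination_def module_hom.sum[OF module_hom_Xi_pairs]
        module_hom.scale[OF module_hom_Xi_pairs] scale_right_diff_distrib sum_subtractf)
  also have "\<dots> = (\<Sum>k<n. \<Sum>i<n. sc (2 * (s k * c k * sign_vec n k i)) (Xi i v))"
    by (intro sum.cong refl)
      (simp add: Xi_pairs_commutator_Xi Xi_combination_def scale_sum_right mult_ac)
  also have "\<dots> = sc 2 (Xi_combination (pair_bracket n s c) v)"
    by (subst sum.swap)
      (simp add: Xi_combination_def pair_bracket_def scale_sum_right scale_sum_left sum_distrib_left)
  finally show ?thesis .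
qed

lemma Xi_pairs_in_op_alg_W_gens: "Xi_pairs \<in> op_alg sc (W_gens sc Xi n)"
proof (cases "2 \<le> n")
  case True
  then have "u_even sc Xi n 2 \<in> op_alg sc (W_gens sc Xi n)"
    by (intro op_alg_gen) (auto simp: W_gens_def)
  then have "(\<lambda>v. sc (\<Sum>j<n. \<Sum>i<j. s i * s j) (id v) - u_even sc Xi n 2 v) \<in> op_alg sc (W_gens sc Xi n)"
    by (intro op_alg_diff module_axioms op_alg_scale op_alg_id)
  then show ?thesis
    by (simp add: u_even_two)
next
  case False
  then have "{..<n} \<subseteq> {0}"
    by auto
  then have "Xi_pairs = (\<lambda>v. 0)"
    unfolding Xi_pairs_def by (intro ext sum.neutral) auto
  then show ?thesis
    using op_alg_zero[OF module_axioms] by simp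
qed

lemma bracket_invariant_subspace_W_gens:
  assumes "1 \<le> n"
  shows "bracket_invariant_subspace n s {c. Xi_combination c \<in> op_alg sc (W_gens sc Xi n)}"
    (is "bracket_invariant_subspace n s {c. Xi_combination c \<in> ?W}")
proof
  show "coeffs.subspace {c. Xi_combination c \<in> ?W}"
    unfolding coeffs.subspace_def
  proof (intro conjI ballI allI)
    have "Xi_combination 0 = (\<lambda>v. 0)"
      by (simp add: Xi_combination_def)
    then show "0 \<in> {c. Xi_combination c \<in> ?W}"
      using op_alg_zero[OF module_axioms] by simp
  next
    fix c d assume "c \<in> {c. Xi_combination c \<in> ?W}" "d \<in> {c. Xi_combination c \<in> ?W}"
    then show "c + d \<in> {c. Xi_combination c \<in> ?W}"
      using op_alg_add by (simp add: Xi_combination_def scale_left_distrib sum.distrib)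
  next
    fix a c assume "c \<in> {c. Xi_combination c \<in> ?W}"
    then show "scale_coeffs a c \<in> {c. Xi_combination c \<in> ?W}"
      using op_alg_scale[of "Xi_combination c" sc _ a]
      by (simp add: Xi_combination_def scale_coeffs_def scale_sum_right)
  qed
next
  fix c assume "c \<in> {c. Xi_combination c \<in> ?W}"
  then have "Xi_pairs \<circ> Xi_combination c \<in> ?W" and "Xi_combination c \<circ> Xi_pairs \<in> ?W"
    using Xi_pairs_in_op_alg_W_gens by (auto intro: op_alg_comp)
  then have "(\<lambda>v. sc (1/2) (Xi_pairs (Xi_combination c v) - Xi_combination c (Xi_pairs v))) \<in> ?W"
    using op_alg_scale op_alg_diff[OF module_axioms] unfolding comp_def by blast
  then show "pair_bracket n s c \<in> {c. Xi_combination c \<in> ?W}"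
    by (simp add: Xi_pairs_commutator)
next
  have "Xi_combination (indicator {..<n}) \<in> ?W"
    unfolding u_odd_one[symmetric] using assms by (intro op_alg_gen) (auto simp: W_gens_def)
  then show "indicator {..<n} \<in> {c. Xi_combination c \<in> ?W}"
    by simp
qed

lemma Xi_in_op_alg_W_gens:
  assumes "typical n s" and "k < n"
  shows "Xi k \<in> op_alg sc (W_gens sc Xi n)"
proof -
  interpret bracket_invariant_subspace n s "{c. Xi_combination c \<in> op_alg sc (W_gens sc Xi n)}"
    using assms(2) by (intro bracket_invariant_subspace_W_gens) simp
  show ?thesis
    using indicator_unit_in_subspace[OF assms] Xi_combination_unit[OF assms(2)] by simp
qed

end

theorem theorem4p2:
  fixes sc :: "complex \<Rightarrow> 'v::ab_group_add \<Rightarrow> 'v"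
    and V0 V1 :: "'v set" and n :: nat and Xi :: "nat \<Rightarrow> 'v \<Rightarrow> 'v" and s :: "nat \<Rightarrow> complex"
  assumes "n \<ge> 1"
    and "typical n s"
    and "Uh_module sc V0 V1 n Xi"
    and "\<forall>i<n. \<forall>v. Xi i (Xi i v) = sc (s i) v"
    and "simple_graded sc V0 V1 (Xi ` {..<n})"
  shows "simple_graded sc V0 V1 (W_gens sc Xi n)"
proof -
  interpret clifford_action sc n Xi s
    using assms(3,4) by (auto simp: clifford_action_def clifford_action_axioms_def Uh_module_def)
  have "Xi ` {..<n} \<subseteq> op_alg sc (W_gens sc Xi n)"
    using Xi_in_op_alg_W_gens[OF assms(2)] by auto
  then show ?thesis
    using simple_graded_op_alg_mono[OF assms(5)] by blast
qed

end
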